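(* Let $m\ge2$, let $U\subset\mathbb C$ be an open disk, and let $(u,\boldsymbol x)\mapsto g_u(\boldsymbol x)$ belong to $\mathfrak X^m(U)$. Let $\theta>0$. Then the function $$p_u(\boldsymbol x):=f_\theta\big(x_1-\log(1+e^{x_1+x_2})\big)\int_{\mathbb R}g_u(x_1+x_2-y,\,y,\,x_3,\dots,x_m)\,dy$$ also belongs to $\mathfrak X^m(U)$.
   Context: $f_\theta(x)=e^{-\theta x-e^{-x}}$. For an open disk $U\subset\mathbb C$ and $m\in\mathbb Z_{\ge1}$, $\mathfrak X^m(U)$ is the set of measurable functions $U\times\mathbb R^m\ni(u,\boldsymbol x)\mapsto g_u(\boldsymbol x)\in\mathbb C$ such that (1) there exist $C,r>0$ with $|g_u(\boldsymbol x)|\le C\exp(-r\sum_{i=1}^m|x_i|)$ for all $(u,\boldsymbol x)\in U\times\mathbb R^m$, and (2) for each fixed $\boldsymbol x\in\mathbb R^m$, $u\mapsto g_u(\boldsymbol x)$ is holomorphic on $U$. *)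

theory Defs
  imports "HOL-Analysis.Analysis"
begin

definition f_theta :: "real \<Rightarrow> real \<Rightarrow> real" where
  "f_theta \<theta> x = exp (- \<theta> * x - exp (- x))"

text \<open>Points of R^m are functions nat => real restricted to the coordinates {..<m}
  (coordinate i-1 of the paper is index i here), i.e. elements of the space of
  PiM {..<m} (\<lambda>_. lborel).\<close>
abbreviation Rm :: "nat \<Rightarrow> (nat \<Rightarrow> real) measure" where
  "Rm m \<equiv> PiM {..<m} (\<lambda>_. lborel)"

definition frakX :: "nat \<Rightarrow> complex set \<Rightarrow> (complex \<Rightarrow> (nat \<Rightarrow> real) \<Rightarrow> complex) set" where
  "frakX m U = {g.
     (\<lambda>(u, x). g u x) \<in> borel_measurable (restrict_space borel U \<Otimes>\<^sub>M Rm m) \<and>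
     (\<exists>C r. C > 0 \<and> r > 0 \<and>
        (\<forall>u\<in>U. \<forall>x\<in>space (Rm m). norm (g u x) \<le> C * exp (- r * (\<Sum>i<m. \<bar>x i\<bar>)))) \<and>
     (\<forall>x\<in>space (Rm m). (\<lambda>u. g u x) holomorphic_on U)}"

end

theory Submission
  imports Defs "HOL-Complex_Analysis.Complex_Analysis"
begin

(*
  The inner integral is holomorphic in u by differentiation under the integral sign:
  Cauchy's estimate bounds the difference quotients of u \<mapsto> g u x uniformly by the
  integrable majorant of g, so dominated convergence applies. Since
  |x1 + x2 - y| + |y| \<ge> (|x1 + x2| + |y|) / 2, the integral decays exponentially in
  x1 + x2 and in x3, ..., xm. The weight f_theta(z) decays exponentially in |z| for
  z = x1 - log(1 + e^(x1 + x2)), and since log(1 + e^s) lies between max s 0 and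
  max s 0 + 1, the quantities |z| and |x1 + x2| together bound |x1| + |x2|.
*)

lemma tendsto_integral_dominated_at_within:
  fixes s :: "'c::first_countable_topology \<Rightarrow> 'a \<Rightarrow> 'b::{banach, second_countable_topology}"
  assumes meas: "\<And>t. t \<in> S \<Longrightarrow> s t \<in> borel_measurable M"
    and w: "integrable M w"
    and lim: "\<And>x. x \<in> space M \<Longrightarrow> ((\<lambda>t. s t x) \<longlongrightarrow> f x) (at t0 within S)"
    and bound: "\<And>t x. t \<in> S \<Longrightarrow> x \<in> space M \<Longrightarrow> norm (s t x) \<le> w x"
  shows "((\<lambda>t. integral\<^sup>L M (s t)) \<longlongrightarrow> integral\<^sup>L M f) (at t0 within S)"
  unfolding tendsto_at_iff_sequentially comp_def
proof (intro allI impI)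
  fix X assume X: "\<forall>i. X i \<in> S - {t0}" "X \<longlonglongrightarrow> t0"
  have lim_X: "(\<lambda>i. s (X i) x) \<longlonglongrightarrow> f x" if "x \<in> space M" for x
    using lim[OF that] X unfolding tendsto_at_iff_sequentially comp_def by blast
  have "f \<in> borel_measurable M"
    by (rule borel_measurable_LIMSEQ_metric[OF _ lim_X]) (use X meas in auto)
  then show "(\<lambda>i. integral\<^sup>L M (s (X i))) \<longlonglongrightarrow> integral\<^sup>L M f"
    by (rule integral_dominated_convergence[OF _ _ w]) (use X meas lim_X bound in auto)
qed

lemma norm_holomorphic_diff_le:
  assumes hol: "f holomorphic_on cball z (2 * \<delta>)" and "\<delta> > 0"
    and bound: "\<And>w. w \<in> cball z (2 * \<delta>) \<Longrightarrow> norm (f w) \<le> b"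
    and u: "u \<in> ball z \<delta>"
  shows "norm (f u - f z) \<le> b / \<delta> * norm (u - z)"
proof (rule field_differentiable_bound[OF convex_ball])
  fix w assume w: "w \<in> ball z \<delta>"
  have cball_w: "cball w \<delta> \<subseteq> cball z (2 * \<delta>)"
  proof
    fix t assume "t \<in> cball w \<delta>"
    then show "t \<in> cball z (2 * \<delta>)"
      using w dist_triangle[of z t w] by (simp add: dist_commute)
  qed
  have "norm ((deriv ^^ 1) f w) \<le> fact 1 * b / \<delta> ^ 1"
    using cball_w \<open>\<delta> > 0\<close> bound ball_subset_cball
    by (intro Cauchy_inequality holomorphic_on_subset[OF hol] holomorphic_on_imp_continuous_on)
       (auto simp: dist_norm)
  then show "norm (deriv f w) \<le> b / \<delta>"
    by simp
  have "f holomorphic_on ball z (2 * \<delta>)"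
    using hol ball_subset_cball holomorphic_on_subset by blast
  moreover have "w \<in> ball z (2 * \<delta>)"
    using w \<open>\<delta> > 0\<close> by auto
  ultimately show "(f has_field_derivative deriv f w) (at w within ball z \<delta>)"
    by (rule has_field_derivative_at_within[OF holomorphic_derivI[OF _ open_ball]])
qed (use u \<open>\<delta> > 0\<close> in auto)

lemma norm_difference_quotient_le:
  assumes "f holomorphic_on cball z (2 * \<delta>)" and "\<delta> > 0"
    and bound: "\<And>w. w \<in> cball z (2 * \<delta>) \<Longrightarrow> norm (f w) \<le> b"
    and "u \<in> ball z \<delta>"
  shows "norm ((f u - f z) / (u - z)) \<le> b / \<delta>"
proof (cases "u = z")
  case True
  \<comment> \<open>the quotient is 0 here because of division by zero\<close>
  have "norm (f z) \<le> b"
    using bound \<open>\<delta> > 0\<close> by simp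
  then have "0 \<le> b"
    using norm_ge_zero order_trans by blast
  with True \<open>\<delta> > 0\<close> show ?thesis
    by simp
next
  case False
  with norm_holomorphic_diff_le[OF assms] show ?thesis
    by (simp add: norm_divide divide_le_eq)
qed

lemma has_field_derivative_lebesgue_integral:
  fixes h :: "complex \<Rightarrow> 'a \<Rightarrow> complex"
  assumes "open U" and u0: "u0 \<in> U"
    and hol: "\<And>y. y \<in> space M \<Longrightarrow> (\<lambda>u. h u y) holomorphic_on U"
    and meas: "\<And>u. u \<in> U \<Longrightarrow> h u \<in> borel_measurable M"
    and B: "integrable M B"
    and bound: "\<And>u y. u \<in> U \<Longrightarrow> y \<in> space M \<Longrightarrow> norm (h u y) \<le> B y"
  shows "((\<lambda>u. LINT y|M. h u y) has_field_derivative (LINT y|M. deriv (\<lambda>u. h u y) u0)) (at u0)"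
proof -
  obtain \<epsilon> where "\<epsilon> > 0" "cball u0 \<epsilon> \<subseteq> U"
    using \<open>open U\<close> u0 open_contains_cball by blast
  then obtain \<delta> where \<delta>: "\<delta> > 0" "cball u0 (2 * \<delta>) \<subseteq> U"
    by (metis field_sum_of_halves half_gt_zero mult_2)
  then have ball_U: "ball u0 \<delta> \<subseteq> U"
    by auto
  define q where "q u y = (h u y - h u0 y) / (u - u0)" for u y
  have integrable: "integrable M (h u)" if "u \<in> U" for u
    using B meas[OF that] by (rule Bochner_Integration.integrable_bound)
      (use bound[OF that] in \<open>auto intro: order_trans[OF _ abs_ge_self]\<close>)
  have q_meas: "q u \<in> borel_measurable M" if "u \<in> U" for u
    unfolding q_def using meas[OF that] meas[OF u0] by measurable
  have q_bound: "norm (q u y) \<le> B y / \<delta>" if "u \<in> ball u0 \<delta>" "y \<in> space M" for u y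
    unfolding q_def using \<delta> that bound
    by (intro norm_difference_quotient_le holomorphic_on_subset[OF hol]) auto
  have q_lim: "((\<lambda>u. q u y) \<longlongrightarrow> deriv (\<lambda>u. h u y) u0) (at u0 within ball u0 \<delta>)"
    if "y \<in> space M" for y
    using holomorphic_derivI[OF hol[OF that] \<open>open U\<close> u0]
    by (simp add: q_def has_field_derivative_iff tendsto_within_subset)
  have "((\<lambda>u. LINT y|M. q u y) \<longlongrightarrow> (LINT y|M. deriv (\<lambda>u. h u y) u0)) (at u0 within ball u0 \<delta>)"
    using ball_U B q_meas q_lim q_bound
    by (intro tendsto_integral_dominated_at_within[where w = "\<lambda>y. B y / \<delta>"]) auto
  then have "((\<lambda>u. LINT y|M. q u y) \<longlongrightarrow> (LINT y|M. deriv (\<lambda>u. h u y) u0)) (at u0)"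
    using at_within_open[of u0 "ball u0 \<delta>"] \<delta>(1) by simp
  moreover have "\<forall>\<^sub>F u in at u0. (LINT y|M. q u y)
      = ((LINT y|M. h u y) - (LINT y|M. h u0 y)) / (u - u0)"
    using eventually_at_in_open'[of "ball u0 \<delta>" u0] \<delta>(1) ball_U u0 integrable
    by (auto simp: q_def integral_diff elim!: eventually_mono)
  ultimately have "((\<lambda>u. ((LINT y|M. h u y) - (LINT y|M. h u0 y)) / (u - u0))
      \<longlongrightarrow> (LINT y|M. deriv (\<lambda>u. h u y) u0)) (at u0)"
    by (rule Lim_transform_eventually)
  then show ?thesis
    by (simp add: has_field_derivative_iff)
qed

lemma holomorphic_on_lebesgue_integral:
  fixes h :: "complex \<Rightarrow> 'a \<Rightarrow> complex"
  assumes "open U"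
    and "\<And>y. y \<in> space M \<Longrightarrow> (\<lambda>u. h u y) holomorphic_on U"
    and "\<And>u. u \<in> U \<Longrightarrow> h u \<in> borel_measurable M"
    and "integrable M B"
    and "\<And>u y. u \<in> U \<Longrightarrow> y \<in> space M \<Longrightarrow> norm (h u y) \<le> B y"
  shows "(\<lambda>u. LINT y|M. h u y) holomorphic_on U"
  unfolding holomorphic_on_open[OF assms(1)]
  using has_field_derivative_lebesgue_integral[OF assms(1) _ assms(2-)] by blast

lemma integrable_exp_neg_abs:
  fixes a :: real
  assumes "a > 0"
  shows "integrable lborel (\<lambda>y. exp (- a * \<bar>y\<bar>))"
proof -
  define h where "h = (\<lambda>y::real. indicator {0..} y *\<^sub>R exp (- a * y))"
  have "(\<lambda>y. exp (- a * y)) absolutely_integrable_on {0::real..}"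
    using integrable_on_exp_minus_to_infinity[OF assms]
    by (rule nonnegative_absolutely_integrable_1) auto
  then have "integrable lebesgue h"
    unfolding h_def set_integrable_def by simp
  then have "integrable lborel h"
    by (subst (asm) integrable_completion) (auto simp: h_def)
  then have "integrable lborel (\<lambda>y. h y + h (0 + (-1) * y))"
    using lborel_integrable_real_affine[of h "-1" 0] by simp
  then show ?thesis
    by (rule Bochner_Integration.integrable_bound) (auto simp: h_def indicator_def abs_if)
qed

lemma f_theta_le:
  assumes "\<theta> > 0"
  shows "f_theta \<theta> z \<le> exp ((\<theta> + 1)\<^sup>2 / 2) * exp (- min \<theta> 1 * \<bar>z\<bar>)"
proof -
  have "- \<theta> * z - exp (- z) \<le> (\<theta> + 1)\<^sup>2 / 2 - min \<theta> 1 * \<bar>z\<bar>"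
  proof (cases "z \<ge> 0")
    case True
    have "min \<theta> 1 * z \<le> \<theta> * z"
      using True by (intro mult_right_mono) auto
    moreover have "0 < exp (- z)" "0 \<le> (\<theta> + 1)\<^sup>2 / 2"
      by simp_all
    ultimately show ?thesis
      using True by linarith
  next
    case False
    define t where "t = - z"
    have "t > 0"
      using False by (simp add: t_def)
    have "1 + t + t\<^sup>2 / 2 \<le> exp t"
      using exp_lower_Taylor_quadratic \<open>t > 0\<close> by simp
    moreover have "min \<theta> 1 * t \<le> t"
      using \<open>t > 0\<close> by (simp add: mult_left_le_one_le)
    moreover have "0 \<le> (t - \<theta>)\<^sup>2"
      by simp
    ultimately have "\<theta> * t - exp t \<le> (\<theta> + 1)\<^sup>2 / 2 - min \<theta> 1 * t"
      using \<open>\<theta> > 0\<close> by (simp add: power2_eq_square algebra_simps)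
    then show ?thesis
      using False by (simp add: t_def)
  qed
  then show ?thesis
    unfolding f_theta_def by (simp flip: exp_add)
qed

lemma ln_one_plus_exp_bounds:
  fixes s :: real
  shows "s \<le> ln (1 + exp s)" and "ln (1 + exp s) \<le> max s 0 + 1"
proof -
  show "s \<le> ln (1 + exp s)"
    by (subst ln_ge_iff) (auto simp: add_pos_pos)
  have "1 + exp s \<le> 2 * exp (max s 0)"
    by (simp add: max_def)
  also have "\<dots> \<le> exp 1 * exp (max s 0)"
    using exp_ge_add_one_self[of 1] by (intro mult_right_mono) auto
  finally have "1 + exp s \<le> exp (max s 0 + 1)"
    by (simp add: exp_add mult.commute)
  then show "ln (1 + exp s) \<le> max s 0 + 1"
    by (metis add_pos_pos exp_gt_zero ln_exp ln_le_cancel_iff zero_less_one)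
qed

lemma exp_decay_split:
  fixes x0 x1 t a r :: real
  assumes "a > 0" "r > 0" "t \<ge> 0"
  shows "exp (- a * \<bar>x0 - ln (1 + exp (x0 + x1))\<bar>) * exp (- r * (\<bar>x0 + x1\<bar> + t))
    \<le> exp (min a r) * exp (- (min a r / 2) * (\<bar>x0\<bar> + \<bar>x1\<bar> + t))"
proof -
  define z where "z = x0 - ln (1 + exp (x0 + x1))"
  define b where "b = min a r / 2"
  have "2 * b \<le> a" "b \<le> r"
    using assms by (auto simp: b_def)
  then have weights: "2 * b * \<bar>z\<bar> \<le> a * \<bar>z\<bar>" "b * \<bar>x0 + x1\<bar> \<le> r * \<bar>x0 + x1\<bar>" "b * t \<le> r * t"
    using \<open>t \<ge> 0\<close> by (simp_all add: mult_right_mono)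
  have "\<bar>x0\<bar> + \<bar>x1\<bar> \<le> 2 * \<bar>z\<bar> + \<bar>x0 + x1\<bar> + 2"
    using ln_one_plus_exp_bounds[of "x0 + x1"] ln_ge_zero[of "1 + exp (x0 + x1)"]
    unfolding z_def by (smt (verit) exp_ge_zero)
  then have "b * (\<bar>x0\<bar> + \<bar>x1\<bar>) \<le> b * (2 * \<bar>z\<bar> + \<bar>x0 + x1\<bar> + 2)"
    using assms by (intro mult_left_mono) (auto simp: b_def)
  with weights have "- a * \<bar>z\<bar> + - r * (\<bar>x0 + x1\<bar> + t) \<le> 2 * b + - b * (\<bar>x0\<bar> + \<bar>x1\<bar> + t)"
    by (simp add: algebra_simps)
  then show ?thesis
    by (simp add: z_def b_def flip: exp_add)
qed

lemma sum_lessThan_first_two: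
  fixes m :: nat
  assumes "m \<ge> 2"
  shows "(\<Sum>i<m. f i) = f 0 + f 1 + (\<Sum>i\<in>{2..<m}. f i)"
proof -
  have "{..<m} = insert 0 (insert 1 {2..<m})"
    using assms by auto
  then show ?thesis
    by (simp add: add.assoc)
qed

definition resplit :: "(nat \<Rightarrow> real) \<Rightarrow> real \<Rightarrow> nat \<Rightarrow> real" where
  "resplit x y = x(0 := x 0 + x 1 - y, 1 := y)"

lemma resplit_in_space:
  assumes "x \<in> space (Rm m)" "m \<ge> 2"
  shows "resplit x y \<in> space (Rm m)"
  using assms by (auto simp: resplit_def space_PiM PiE_def extensional_def)

lemma measurable_resplit:
  assumes "m \<ge> 2"
  shows "(\<lambda>(x, y). resplit x y) \<in> measurable (Rm m \<Otimes>\<^sub>M lborel) (Rm m)"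
proof -
  have "{..<m} = {..<m} \<union> {0}" "{..<m} = {..<m} \<union> {1}"
    using assms by auto
  then show ?thesis
    unfolding resplit_def case_prod_beta using assms
    by (intro measurable_fun_upd[where J = "{..<m}"]) measurable
qed

lemma sum_abs_resplit:
  assumes "m \<ge> 2"
  shows "(\<Sum>i<m. \<bar>resplit x y i\<bar>) = \<bar>x 0 + x 1 - y\<bar> + \<bar>y\<bar> + (\<Sum>i\<in>{2..<m}. \<bar>x i\<bar>)"
  by (simp add: sum_lessThan_first_two[OF assms] resplit_def)

lemma exp_sum_abs_resplit_le:
  fixes r :: real
  assumes "m \<ge> 2" "r \<ge> 0"
  shows "exp (- r * (\<Sum>i<m. \<bar>resplit x y i\<bar>))
    \<le> exp (- (r / 2) * (\<bar>x 0 + x 1\<bar> + (\<Sum>i\<in>{2..<m}. \<bar>x i\<bar>))) * exp (- (r / 2) * \<bar>y\<bar>)"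
proof -
  have "\<bar>x 0 + x 1\<bar> + \<bar>y\<bar> \<le> 2 * (\<bar>x 0 + x 1 - y\<bar> + \<bar>y\<bar>)"
    by (smt (verit))
  then have "r * (\<bar>x 0 + x 1\<bar> + \<bar>y\<bar>) \<le> r * (2 * (\<bar>x 0 + x 1 - y\<bar> + \<bar>y\<bar>))"
    using \<open>r \<ge> 0\<close> by (rule mult_left_mono)
  moreover have "0 \<le> r * (\<Sum>i\<in>{2..<m}. \<bar>x i\<bar>)"
    using \<open>r \<ge> 0\<close> by (simp add: sum_nonneg)
  ultimately show ?thesis
    by (simp add: sum_abs_resplit[OF \<open>m \<ge> 2\<close>] algebra_simps flip: exp_add)
qed

lemma measurable_resplit_integrand:
  fixes g :: "'c \<Rightarrow> (nat \<Rightarrow> real) \<Rightarrow> 'b::{banach, second_countable_topology}"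
  assumes g: "(\<lambda>(u, x). g u x) \<in> borel_measurable (N \<Otimes>\<^sub>M Rm m)" and "m \<ge> 2"
  shows "(\<lambda>((u, x), y). g u (resplit x y)) \<in> borel_measurable ((N \<Otimes>\<^sub>M Rm m) \<Otimes>\<^sub>M lborel)"
proof -
  have "(\<lambda>p. resplit (snd (fst p)) (snd p)) \<in> measurable ((N \<Otimes>\<^sub>M Rm m) \<Otimes>\<^sub>M lborel) (Rm m)"
    using measurable_compose[OF _ measurable_resplit[OF \<open>m \<ge> 2\<close>],
        of "\<lambda>p. (snd (fst p), snd p)" "(N \<Otimes>\<^sub>M Rm m) \<Otimes>\<^sub>M lborel"]
    by simp
  then have "(\<lambda>p. (fst (fst p), resplit (snd (fst p)) (snd p)))
      \<in> measurable ((N \<Otimes>\<^sub>M Rm m) \<Otimes>\<^sub>M lborel) (N \<Otimes>\<^sub>M Rm m)"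
    by measurable
  from measurable_compose[OF this g] show ?thesis
    by (simp add: split_def)
qed

lemma resplit_integral_bounds:
  fixes g :: "complex \<Rightarrow> (nat \<Rightarrow> real) \<Rightarrow> complex"
  assumes "g \<in> frakX m U" and "open U" and m: "m \<ge> 2"
  obtains C r where "C > 0" and "r > 0"
    and "(\<lambda>(u, x). LINT y|lborel. g u (resplit x y))
      \<in> borel_measurable (restrict_space borel U \<Otimes>\<^sub>M Rm m)"
    and "\<And>x. x \<in> space (Rm m) \<Longrightarrow> (\<lambda>u. LINT y|lborel. g u (resplit x y)) holomorphic_on U"
    and "\<And>u x. u \<in> U \<Longrightarrow> x \<in> space (Rm m) \<Longrightarrow>
      norm (LINT y|lborel. g u (resplit x y)) \<le> C * exp (- r * (\<bar>x 0 + x 1\<bar> + (\<Sum>i\<in>{2..<m}. \<bar>x i\<bar>)))"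
proof -
  obtain C r where g_meas: "(\<lambda>(u, x). g u x) \<in> borel_measurable (restrict_space borel U \<Otimes>\<^sub>M Rm m)"
    and "C > 0" "r > 0"
    and g_bound: "\<And>u x. u \<in> U \<Longrightarrow> x \<in> space (Rm m) \<Longrightarrow>
      norm (g u x) \<le> C * exp (- r * (\<Sum>i<m. \<bar>x i\<bar>))"
    and g_hol: "\<And>x. x \<in> space (Rm m) \<Longrightarrow> (\<lambda>u. g u x) holomorphic_on U"
    using \<open>g \<in> frakX m U\<close> unfolding frakX_def by blast
  define E where "E x = C * exp (- (r / 2) * (\<bar>x 0 + x 1\<bar> + (\<Sum>i\<in>{2..<m}. \<bar>x i\<bar>)))"
    for x :: "nat \<Rightarrow> real"
  define K where "K = (LINT y|lborel. exp (- (r / 2) * \<bar>y\<bar>))"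
  have K_integrable: "integrable lborel (\<lambda>y. exp (- (r / 2) * \<bar>y\<bar>))"
    using \<open>r > 0\<close> by (intro integrable_exp_neg_abs) simp
  have "K \<ge> 0"
    unfolding K_def by (rule Bochner_Integration.integral_nonneg) simp
  have integrand_bound: "norm (g u (resplit x y)) \<le> E x * exp (- (r / 2) * \<bar>y\<bar>)"
    if "u \<in> U" "x \<in> space (Rm m)" for u x y
  proof -
    have "C * exp (- r * (\<Sum>i<m. \<bar>resplit x y i\<bar>)) \<le> E x * exp (- (r / 2) * \<bar>y\<bar>)"
      using exp_sum_abs_resplit_le[OF m, of r x y] \<open>C > 0\<close> \<open>r > 0\<close>
      by (simp add: E_def mult.assoc)
    with g_bound[OF that(1) resplit_in_space[OF that(2) m]] show ?thesis
      by (rule order_trans)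
  qed
  have integrand: "(\<lambda>((u, x), y). g u (resplit x y))
      \<in> borel_measurable ((restrict_space borel U \<Otimes>\<^sub>M Rm m) \<Otimes>\<^sub>M lborel)"
    by (rule measurable_resplit_integrand[OF g_meas m])
  have integrand_slice: "(\<lambda>y. g u (resplit x y)) \<in> borel_measurable lborel"
    if "u \<in> U" "x \<in> space (Rm m)" for u x
    using measurable_Pair2[OF integrand, of "(u, x)"] that
    by (simp add: space_pair_measure space_restrict_space)
  show thesis
  proof
    show "C * (K + 1) > 0" "r / 2 > 0"
      using \<open>C > 0\<close> \<open>r > 0\<close> \<open>K \<ge> 0\<close> by simp_all
    show "(\<lambda>(u, x). LINT y|lborel. g u (resplit x y))
        \<in> borel_measurable (restrict_space borel U \<Otimes>\<^sub>M Rm m)"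
      using lborel.borel_measurable_lebesgue_integral[OF integrand] by (simp add: split_def)
    show "(\<lambda>u. LINT y|lborel. g u (resplit x y)) holomorphic_on U"
      if "x \<in> space (Rm m)" for x
      using \<open>open U\<close> g_hol resplit_in_space[OF that m] integrand_slice[OF _ that] K_integrable
        integrand_bound[OF _ that]
      by (intro holomorphic_on_lebesgue_integral[where B = "\<lambda>y. E x * exp (- (r / 2) * \<bar>y\<bar>)"])
        auto
    show "norm (LINT y|lborel. g u (resplit x y))
        \<le> C * (K + 1) * exp (- (r / 2) * (\<bar>x 0 + x 1\<bar> + (\<Sum>i\<in>{2..<m}. \<bar>x i\<bar>)))"
      if "u \<in> U" "x \<in> space (Rm m)" for u x
    proof -
      have "norm (LINT y|lborel. g u (resplit x y)) \<le> (LINT y|lborel. norm (g u (resplit x y)))"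
        by (rule integral_norm_bound)
      also have "\<dots> \<le> (LINT y|lborel. E x * exp (- (r / 2) * \<bar>y\<bar>))"
        using K_integrable integrand_bound[OF that] \<open>C > 0\<close> by (intro integral_mono') (auto simp: E_def)
      also have "\<dots> = E x * K"
        by (simp add: K_def)
      also have "\<dots> \<le> E x * (K + 1)"
        using \<open>C > 0\<close> by (simp add: E_def)
      finally show ?thesis
        by (simp add: E_def mult_ac)
    qed
  qed
qed

lemma frakX_weighted_product:
  fixes I :: "complex \<Rightarrow> (nat \<Rightarrow> real) \<Rightarrow> complex" and w :: "real \<Rightarrow> real"
  assumes m: "m \<ge> 2" and "a > 0" "r > 0" "A > 0" "C > 0"
    and I_meas: "(\<lambda>(u, x). I u x) \<in> borel_measurable (restrict_space borel U \<Otimes>\<^sub>M Rm m)"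
    and I_hol: "\<And>x. x \<in> space (Rm m) \<Longrightarrow> (\<lambda>u. I u x) holomorphic_on U"
    and I_bound: "\<And>u x. u \<in> U \<Longrightarrow> x \<in> space (Rm m) \<Longrightarrow>
      norm (I u x) \<le> C * exp (- r * (\<bar>x 0 + x 1\<bar> + (\<Sum>i\<in>{2..<m}. \<bar>x i\<bar>)))"
    and w_meas: "w \<in> borel_measurable borel"
    and w_bound: "\<And>z. \<bar>w z\<bar> \<le> A * exp (- a * \<bar>z\<bar>)"
  shows "(\<lambda>u x. complex_of_real (w (x 0 - ln (1 + exp (x 0 + x 1)))) * I u x) \<in> frakX m U"
proof -
  define W where "W x = w (x 0 - ln (1 + exp (x 0 + x 1)))" for x :: "nat \<Rightarrow> real"
  define b where "b = min a r / 2"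
  have [measurable]: "(\<lambda>x. x 0) \<in> borel_measurable (Rm m)" "(\<lambda>x. x 1) \<in> borel_measurable (Rm m)"
    using m measurable_component_singleton[of _ "{..<m}" "\<lambda>_. lborel"] by auto
  have "W \<in> borel_measurable (Rm m)"
    unfolding W_def using m w_meas by measurable
  then have meas: "(\<lambda>(u, x). complex_of_real (W x) * I u x)
      \<in> borel_measurable (restrict_space borel U \<Otimes>\<^sub>M Rm m)"
    using I_meas by measurable
  have bound: "norm (complex_of_real (W x) * I u x)
      \<le> A * C * exp (min a r) * exp (- b * (\<Sum>i<m. \<bar>x i\<bar>))"
    if "u \<in> U" "x \<in> space (Rm m)" for u x
  proof -
    define T where "T = (\<Sum>i\<in>{2..<m}. \<bar>x i\<bar>)"
    have "T \<ge> 0"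
      by (simp add: T_def sum_nonneg)
    have "norm (complex_of_real (W x) * I u x) = \<bar>W x\<bar> * norm (I u x)"
      by (simp add: norm_mult)
    also have "\<dots> \<le> (A * exp (- a * \<bar>x 0 - ln (1 + exp (x 0 + x 1))\<bar>))
        * (C * exp (- r * (\<bar>x 0 + x 1\<bar> + T)))"
      using w_bound I_bound[OF that] \<open>A > 0\<close> unfolding W_def T_def by (intro mult_mono) auto
    also have "\<dots> = A * C * (exp (- a * \<bar>x 0 - ln (1 + exp (x 0 + x 1))\<bar>)
        * exp (- r * (\<bar>x 0 + x 1\<bar> + T)))"
      by (simp add: mult_ac)
    also have "\<dots> \<le> A * C * (exp (min a r) * exp (- b * (\<bar>x 0\<bar> + \<bar>x 1\<bar> + T)))"
      using exp_decay_split[OF \<open>a > 0\<close> \<open>r > 0\<close> \<open>T \<ge> 0\<close>, of "x 0" "x 1"] \<open>A > 0\<close> \<open>C > 0\<close>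
      by (simp add: b_def)
    also have "\<dots> = A * C * exp (min a r) * exp (- b * (\<Sum>i<m. \<bar>x i\<bar>))"
      by (simp add: T_def sum_lessThan_first_two[OF m] add.assoc)
    finally show ?thesis .
  qed
  have hol: "(\<lambda>u. complex_of_real (W x) * I u x) holomorphic_on U" if "x \<in> space (Rm m)" for x
    using I_hol[OF that] by (rule holomorphic_on_mult[OF holomorphic_on_const])
  have "A * C * exp (min a r) > 0" "b > 0"
    using assms by (simp_all add: b_def)
  with meas bound hol show ?thesis
    unfolding frakX_def W_def[symmetric] by blast
qed

theorem lemma3p24:
  fixes m :: nat and c :: complex and \<rho> \<theta> :: real
    and g :: "complex \<Rightarrow> (nat \<Rightarrow> real) \<Rightarrow> complex"
  assumes "m \<ge> 2" and "\<rho> > 0"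
    and "g \<in> frakX m (ball c \<rho>)"
    and "\<theta> > 0"
  shows "(\<lambda>u x. complex_of_real (f_theta \<theta> (x 0 - ln (1 + exp (x 0 + x 1)))) *
            (LINT y|lborel. g u (x(0 := x 0 + x 1 - y, 1 := y))))
         \<in> frakX m (ball c \<rho>)"
proof -
  obtain C r where "C > 0" "r > 0"
    and I_meas: "(\<lambda>(u, x). LINT y|lborel. g u (resplit x y))
      \<in> borel_measurable (restrict_space borel (ball c \<rho>) \<Otimes>\<^sub>M Rm m)"
    and I_hol: "\<And>x. x \<in> space (Rm m) \<Longrightarrow>
      (\<lambda>u. LINT y|lborel. g u (resplit x y)) holomorphic_on ball c \<rho>"
    and I_bound: "\<And>u x. u \<in> ball c \<rho> \<Longrightarrow> x \<in> space (Rm m) \<Longrightarrow>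
      norm (LINT y|lborel. g u (resplit x y))
        \<le> C * exp (- r * (\<bar>x 0 + x 1\<bar> + (\<Sum>i\<in>{2..<m}. \<bar>x i\<bar>)))"
    using resplit_integral_bounds[OF assms(3) open_ball assms(1)] by blast
  have "f_theta \<theta> \<in> borel_measurable borel"
    unfolding f_theta_def by measurable
  moreover have "\<bar>f_theta \<theta> z\<bar> \<le> exp ((\<theta> + 1)\<^sup>2 / 2) * exp (- min \<theta> 1 * \<bar>z\<bar>)" for z
    using f_theta_le[OF \<open>\<theta> > 0\<close>] by (simp add: f_theta_def)
  ultimately have "(\<lambda>u x. complex_of_real (f_theta \<theta> (x 0 - ln (1 + exp (x 0 + x 1))))
      * (LINT y|lborel. g u (resplit x y))) \<in> frakX m (ball c \<rho>)"
    using \<open>m \<ge> 2\<close> \<open>\<theta> > 0\<close> \<open>C > 0\<close> \<open>r > 0\<close>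
    by (intro frakX_weighted_product[OF _ _ _ _ _ I_meas I_hol I_bound,
          where a = "min \<theta> 1" and A = "exp ((\<theta> + 1)\<^sup>2 / 2)"]) auto
  then show ?thesis
    by (simp add: resplit_def)
qed

end
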